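(* Let $\mathbf{i}=(i_1,\dots,i_r)$, $\mathbf{j}=(j_1,\dots,j_r)$ be sequences of positive integers with equal sums $N$, and suppose $g=\det M(\mathbf{i};\mathbf{j})$ is nonzero and irreducible. If $r=1$, then $g$ is homogeneous. If $r>1$, then the homogeneous component of $g$ of degree $\deg(g)-1$ is nonzero.
   Context: $M(\mathbf{i};\mathbf{j})$ is the $N\times N$ matrix whose rows are divided into blocks of sizes $i_1,\dots,i_r$ (top to bottom) and columns into blocks of sizes $j_r,\dots,j_1$ (left to right; the block of size $j_t$ is column block $t$). Row block $s$ has an $i_s\times j_s$ matrix $A^s$ of indeterminates in column block $s$; for $s\ge 2$ the matrix $I_{i_s,j_{s-1}}$ in column block $s-1$; zeros in column blocks $t<s-1$; and indeterminates in column blocks $t>s$. $I_{c,d}$ is the $c\times d$ matrix with $1$s on its main diagonal and $0$s elsewhere. All indeterminates are distinct. *)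

theory Defs
  imports "HOL-Library.Poly_Mapping" "HOL-Computational_Algebra.Factorial_Ring"
    "Jordan_Normal_Form.Determinant"
begin

text \<open>Multivariate polynomials over a field 'a in indeterminates indexed by
  matrix positions (row, column) :: nat \<times> nat, represented as finitely
  supported maps from monomials (exponent vectors) to coefficients.\<close>

type_synonym 'a mpoly = "((nat \<times> nat) \<Rightarrow>\<^sub>0 nat) \<Rightarrow>\<^sub>0 'a"

definition Xvar :: "nat \<times> nat \<Rightarrow> 'a::comm_semiring_1 mpoly" where
  "Xvar v = Poly_Mapping.single (Poly_Mapping.single v 1) 1"

definition const_mp :: "'a::comm_semiring_1 \<Rightarrow> 'a mpoly" where
  "const_mp c = Poly_Mapping.single 0 c"

definition mon_deg :: "((nat \<times> nat) \<Rightarrow>\<^sub>0 nat) \<Rightarrow> nat" where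
  "mon_deg m = (\<Sum>v\<in>Poly_Mapping.keys m. Poly_Mapping.lookup m v)"

definition total_deg :: "'a::zero mpoly \<Rightarrow> nat" where
  "total_deg g = Max (insert 0 (mon_deg ` Poly_Mapping.keys g))"

definition hom_component :: "nat \<Rightarrow> 'a::zero mpoly \<Rightarrow> 'a mpoly" where
  "hom_component d g = Abs_poly_mapping (\<lambda>m. if mon_deg m = d then Poly_Mapping.lookup g m else 0)"

definition homogeneous :: "'a::zero mpoly \<Rightarrow> bool" where
  "homogeneous g \<longleftrightarrow> (\<forall>m\<in>Poly_Mapping.keys g. mon_deg m = total_deg g)"

text \<open>Blocks (0-based): position p lies in block b of a list of block sizes
  iff sum of the first b sizes \<le> p < sum of the first b+1 sizes.\<close>
definition block_of :: "nat list \<Rightarrow> nat \<Rightarrow> nat" where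
  "block_of sz p = (LEAST b. p < sum_list (take (Suc b) sz))"

definition block_start :: "nat list \<Rightarrow> nat \<Rightarrow> nat" where
  "block_start sz b = sum_list (take b sz)"

text \<open>Rows are split in blocks of sizes i_1..i_r
  (top to bottom, 0-based row block s0 = s - 1).  Columns are split in
  blocks of sizes j_r,...,j_1 left to right; the u-th block from the left
  (0-based, in the list rev js) is column block t with t0 = t - 1 = r - 1 - u.
  Entry in row block s, column block t: indeterminate if t \<ge> s;
  identity I_{i_s,j_{s-1}} entry if t = s - 1; zero if t < s - 1.
  Indeterminate at position (p,q) is Xvar (p,q), so all are distinct.\<close>
definition M_entry :: "nat list \<Rightarrow> nat list \<Rightarrow> nat \<Rightarrow> nat \<Rightarrow> 'a::comm_semiring_1 mpoly" where
  "M_entry ii jj p q =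
    (let r = length ii;
         s0 = block_of ii p;
         u = block_of (rev jj) q;
         t0 = r - 1 - u;
         lr = p - block_start ii s0;
         lc = q - block_start (rev jj) u
     in if s0 \<le> t0 then Xvar (p, q)
        else if Suc t0 = s0 then (if lr = lc then 1 else 0)
        else 0)"

definition Mmat :: "nat list \<Rightarrow> nat list \<Rightarrow> 'a::comm_semiring_1 mpoly mat" where
  "Mmat ii jj = mat (sum_list ii) (sum_list jj) (\<lambda>(p, q). M_entry ii jj p q)"

end

theory Submission
  imports Defs
begin

text \<open>Expanding det M(i;j) over permutations, the only nonzero terms come from permutations
  that pick, in every row, either an indeterminate or a 1 of an identity block; such a
  term is \<open>\<plusminus>\<close> the product of the indeterminates it picks.  Distinct permutations pick
  distinct sets of indeterminates, so nothing cancels and a term has degree N minus the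
  number of 1s it uses.  For r = 1 there are no identity blocks, so every term has
  degree N.  For r > 1 take a term of maximal degree.  If it misses some 1 of an identity
  block, a transposition bringing that 1 in yields a term of degree one less.  Otherwise
  every term uses all these 1s; then every term maps the first row block onto the same
  set of columns, so the determinant factors into two minors without constant term,
  contradicting irreducibility.\<close>

section \<open>Monomials and constant terms\<close>

lemma prod_single_one:
  fixes f :: "'b \<Rightarrow> 'm::comm_monoid_add"
  assumes "finite S"
  shows "(\<Prod>i\<in>S. Poly_Mapping.single (f i) (1::'a::comm_semiring_1))
    = Poly_Mapping.single (\<Sum>i\<in>S. f i) 1"
  using assms by (induction S rule: finite_induct) (auto simp: mult_single add.commute)

lemma mon_deg_eq_sum:
  assumes "finite K" "Poly_Mapping.keys m \<subseteq> K"
  shows "mon_deg m = (\<Sum>v\<in>K. Poly_Mapping.lookup m v)"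
  unfolding mon_deg_def
  by (rule sum.mono_neutral_left) (use assms in \<open>auto simp: in_keys_iff\<close>)

lemma mon_deg_add: "mon_deg (a + b) = mon_deg a + mon_deg b"
proof -
  let ?K = "Poly_Mapping.keys a \<union> Poly_Mapping.keys b"
  have "mon_deg (a + b) = (\<Sum>v\<in>?K. Poly_Mapping.lookup (a + b) v)"
    by (rule mon_deg_eq_sum) (auto simp: keys_add)
  also have "\<dots> = (\<Sum>v\<in>?K. Poly_Mapping.lookup a v) + (\<Sum>v\<in>?K. Poly_Mapping.lookup b v)"
    by (simp add: lookup_add sum.distrib)
  also have "\<dots> = mon_deg a + mon_deg b"
    using mon_deg_eq_sum[of ?K a] mon_deg_eq_sum[of ?K b] by auto
  finally show ?thesis .
qed

lemma mon_deg_zero [simp]: "mon_deg 0 = 0"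
  by (simp add: mon_deg_def)

lemma mon_deg_sum: "mon_deg (\<Sum>i\<in>S. f i) = (\<Sum>i\<in>S. mon_deg (f i))"
  by (induction S rule: infinite_finite_induct) (auto simp: mon_deg_add)

lemma mon_deg_single [simp]: "mon_deg (Poly_Mapping.single v k) = k"
  by (cases "k = 0") (simp_all add: mon_deg_def)

lemma lookup_hom_component:
  "Poly_Mapping.lookup (hom_component d g) m = (if mon_deg m = d then Poly_Mapping.lookup g m else 0)"
proof -
  have "finite {m. (if mon_deg m = d then Poly_Mapping.lookup g m else 0) \<noteq> 0}"
    by (rule finite_subset[of _ "Poly_Mapping.keys g"]) (auto simp: in_keys_iff)
  then show ?thesis unfolding hom_component_def by simp
qed

lemma monomial_add_eq_0_iff:
  fixes l m :: "'k \<Rightarrow>\<^sub>0 nat"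
  shows "l + m = 0 \<longleftrightarrow> l = 0 \<and> m = 0"
proof
  assume "l + m = 0"
  then have "Poly_Mapping.lookup l k = 0 \<and> Poly_Mapping.lookup m k = 0" for k
    by (metis add_is_0 lookup_add lookup_zero)
  then show "l = 0 \<and> m = 0" by (auto intro: poly_mapping_eqI)
qed simp

lemma lookup_mult_at_0:
  fixes f g :: "('k \<Rightarrow>\<^sub>0 nat) \<Rightarrow>\<^sub>0 'a::comm_semiring_1"
  shows "Poly_Mapping.lookup (f * g) 0 = Poly_Mapping.lookup f 0 * Poly_Mapping.lookup g 0"
proof -
  have inner: "Sum_any (\<lambda>m. Poly_Mapping.lookup g m when 0 = l + m) = (Poly_Mapping.lookup g 0 when l = 0)"
    for l :: "'k \<Rightarrow>\<^sub>0 nat"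
  proof (cases "l = 0")
    case False
    then have "(\<lambda>m. Poly_Mapping.lookup g m when 0 = l + m) = (\<lambda>m. 0)"
      using monomial_add_eq_0_iff[of l] by (auto simp: when_def)
    then have "Sum_any (\<lambda>m. Poly_Mapping.lookup g m when 0 = l + m) = Sum_any (\<lambda>m :: 'k \<Rightarrow>\<^sub>0 nat. 0 :: 'a)"
      by (simp only:)
    then show ?thesis using False by simp
  qed simp
  have "Poly_Mapping.lookup (f * g) 0
      = Sum_any (\<lambda>l. Poly_Mapping.lookup f l * Poly_Mapping.lookup g 0 when l = 0)"
    unfolding lookup_mult inner by (simp add: mult_when)
  then show ?thesis by simp
qed

lemma lookup_prod_at_0:
  fixes f :: "'b \<Rightarrow> ('k \<Rightarrow>\<^sub>0 nat) \<Rightarrow>\<^sub>0 'a::comm_semiring_1"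
  shows "Poly_Mapping.lookup (\<Prod>i\<in>S. f i) 0 = (\<Prod>i\<in>S. Poly_Mapping.lookup (f i) 0)"
  by (induction S rule: infinite_finite_induct) (auto simp: lookup_mult_at_0 lookup_one)

lemma lookup_of_int_mult_at_0:
  fixes f :: "('k \<Rightarrow>\<^sub>0 nat) \<Rightarrow>\<^sub>0 'a::comm_ring_1"
  shows "Poly_Mapping.lookup (of_int k * f) 0 = of_int k * Poly_Mapping.lookup f 0"
  by (simp add: lookup_mult_at_0 flip: single_of_int)

lemma lookup_Xvar_at_0 [simp]: "Poly_Mapping.lookup (Xvar v) 0 = 0"
proof -
  have "Poly_Mapping.single v (1::nat) \<noteq> 0"
    by (metis lookup_single_eq lookup_zero one_neq_zero)
  then show ?thesis by (simp add: Xvar_def lookup_single when_def)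
qed

lemma not_irreducible_if_factors_vanish_at_0:
  fixes f g :: "('k \<Rightarrow>\<^sub>0 nat) \<Rightarrow>\<^sub>0 'a::comm_semiring_1"
  assumes "Poly_Mapping.lookup f 0 = 0" "Poly_Mapping.lookup g 0 = 0"
  shows "\<not> irreducible (f * g)"
proof
  assume "irreducible (f * g)"
  then have "f dvd 1 \<or> g dvd 1" by (rule irreducibleD) simp
  moreover have "\<not> h dvd 1" if "Poly_Mapping.lookup h 0 = 0" for h :: "('k \<Rightarrow>\<^sub>0 nat) \<Rightarrow>\<^sub>0 'a"
  proof
    assume "h dvd 1"
    then obtain h' where "1 = h * h'" by (rule dvdE)
    then show False
      using lookup_mult_at_0[of h h'] that by (simp add: lookup_one)
  qed
  ultimately show False using assms by blast
qed

section \<open>Blocks of a list of sizes\<close>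

lemma sum_list_take_mono:
  fixes xs :: "nat list"
  assumes "k \<le> k'" shows "sum_list (take k xs) \<le> sum_list (take k' xs)"
proof -
  have "take k' xs = take k xs @ take (k' - k) (drop k xs)"
    using assms by (metis le_add_diff_inverse take_add)
  then show ?thesis by (metis le_add1 sum_list_append)
qed

lemma block_of_less_length:
  assumes "p < sum_list sz" shows "block_of sz p < length sz"
proof -
  have "length sz > 0" using assms by (cases sz) auto
  then have "p < sum_list (take (Suc (length sz - 1)) sz)" using assms by simp
  then have "block_of sz p \<le> length sz - 1"
    unfolding block_of_def by (rule Least_le)
  then show ?thesis using \<open>length sz > 0\<close> by linarith
qed

lemma block_start_block_of_le:
  assumes "p < sum_list sz" shows "block_start sz (block_of sz p) \<le> p"
proof (cases "block_of sz p")
  case (Suc b)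
  then have "\<not> p < sum_list (take (Suc b) sz)"
    unfolding block_of_def by (metis lessI not_less_Least)
  then show ?thesis using Suc by (simp add: block_start_def)
qed (simp add: block_start_def)

lemma block_of_eqI:
  assumes "block_start sz b \<le> p" "p < block_start sz (Suc b)"
  shows "block_of sz p = b"
  unfolding block_of_def
proof (rule Least_equality)
  show "p < sum_list (take (Suc b) sz)" using assms by (simp add: block_start_def)
  fix y assume y: "p < sum_list (take (Suc y) sz)"
  show "b \<le> y"
  proof (rule ccontr)
    assume "\<not> b \<le> y"
    then have "sum_list (take (Suc y) sz) \<le> sum_list (take b sz)"
      by (intro sum_list_take_mono) simp
    then show False using y assms(1) by (simp add: block_start_def)
  qed
qed

section \<open>The block structure of M(i;j)\<close>

locale M_matrix =
  fixes ii jj :: "nat list"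
  assumes length_eq: "length ii = length jj"
    and ii_pos: "\<forall>k\<in>set ii. 0 < k" and jj_pos: "\<forall>k\<in>set jj. 0 < k"
    and sum_eq: "sum_list ii = sum_list jj"
begin

abbreviation N :: nat where "N \<equiv> sum_list ii"
abbreviation r :: nat where "r \<equiv> length ii"

text \<open>In the paper's numbering, row p lies in row block s = row_block p + 1 and column q in
  column block t = col_block q + 1; col_slot q counts column blocks from the left.\<close>

definition row_block :: "nat \<Rightarrow> nat" where "row_block p = block_of ii p"
definition col_slot :: "nat \<Rightarrow> nat" where "col_slot q = block_of (rev jj) q"
definition col_block :: "nat \<Rightarrow> nat" where "col_block q = r - 1 - col_slot q"

definition is_var :: "nat \<Rightarrow> nat \<Rightarrow> bool" where
  "is_var p q \<longleftrightarrow> row_block p \<le> col_block q"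

definition is_one :: "nat \<Rightarrow> nat \<Rightarrow> bool" where
  "is_one p q \<longleftrightarrow> row_block p = Suc (col_block q) \<and>
     p - block_start ii (row_block p) = q - block_start (rev jj) (col_slot q)"

lemma M_entry_eq:
  "M_entry ii jj p q = (if is_var p q then Xvar (p, q) else if is_one p q then 1 else 0)"
  unfolding M_entry_def is_var_def is_one_def row_block_def col_slot_def col_block_def Let_def
  by auto

lemma not_var_if_one: "is_one p q \<Longrightarrow> \<not> is_var p q"
  unfolding is_one_def is_var_def by simp

lemma var_exchange: "is_one a b \<Longrightarrow> is_var a b' \<Longrightarrow> is_var a' b \<Longrightarrow> is_var a' b'"
  unfolding is_one_def is_var_def by simp

lemma row_block_less: "p < N \<Longrightarrow> row_block p < r"
  unfolding row_block_def by (rule block_of_less_length)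

lemma col_slot_less: "q < N \<Longrightarrow> col_slot q < r"
  unfolding col_slot_def using block_of_less_length[of q "rev jj"] sum_eq length_eq by simp

lemma one_unique_in_row:
  assumes "q < N" "q' < N" "is_one p q" "is_one p q'" shows "q = q'"
proof -
  have "col_block q = col_block q'" using assms(3,4) unfolding is_one_def by simp
  then have slot: "col_slot q = col_slot q'"
    using col_slot_less[OF assms(1)] col_slot_less[OF assms(2)] unfolding col_block_def by simp
  have "q - block_start (rev jj) (col_slot q) = q' - block_start (rev jj) (col_slot q')"
    using assms(3,4) unfolding is_one_def by metis
  moreover have "block_start (rev jj) (col_slot q) \<le> q" "block_start (rev jj) (col_slot q') \<le> q'"
    unfolding col_slot_def using block_start_block_of_le sum_eq assms(1,2) by auto
  ultimately show ?thesis using slot by simp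
qed

lemma one_unique_in_col:
  assumes "p < N" "p' < N" "is_one p q" "is_one p' q" shows "p = p'"
proof -
  have blocks: "row_block p = row_block p'" using assms(3,4) unfolding is_one_def by simp
  have "p - block_start ii (row_block p) = p' - block_start ii (row_block p')"
    using assms(3,4) unfolding is_one_def by metis
  moreover have "block_start ii (row_block p) \<le> p" "block_start ii (row_block p') \<le> p'"
    unfolding row_block_def using block_start_block_of_le assms(1,2) by auto
  ultimately show ?thesis using blocks by simp
qed

lemma row_block_0: "0 < r \<Longrightarrow> row_block 0 = 0"
  unfolding row_block_def using ii_pos
  by (intro block_of_eqI) (auto simp: block_start_def take_Suc_conv_app_nth)

lemma col_block_0: "0 < r \<Longrightarrow> col_block 0 = r - 1"
proof -
  assume "0 < r"
  then have "jj \<noteq> []" using length_eq by auto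
  then have "last jj > 0" using jj_pos by auto
  then have "col_slot 0 = 0" unfolding col_slot_def using \<open>jj \<noteq> []\<close>
    by (intro block_of_eqI) (auto simp: block_start_def take_Suc_conv_app_nth rev_nth last_conv_nth)
  then show ?thesis unfolding col_block_def by simp
qed

lemma N_pos: "0 < r \<Longrightarrow> 0 < N"
  using ii_pos by (cases ii) auto

lemma all_var_if_single_block: "r = 1 \<Longrightarrow> p < N \<Longrightarrow> is_var p q"
  using row_block_less[of p] unfolding is_var_def by simp

lemma one_in_first_identity_block:
  assumes "1 < r"
  obtains c d where "c < N" "d < N" "row_block c = 1" "col_block d = 0" "is_one c d"
proof -
  obtain x y rest where ii: "ii = x # y # rest" using assms by (cases ii; cases "tl ii") auto
  obtain z rest' where jj: "jj = z # rest'" using assms length_eq by (cases jj) auto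
  have "y > 0" "z > 0" using ii_pos jj_pos ii jj by auto
  have start_c: "block_start ii 1 = x" using ii by (simp add: block_start_def)
  have row_c: "row_block x = 1" unfolding row_block_def using ii \<open>y > 0\<close>
    by (intro block_of_eqI) (auto simp: block_start_def)
  have "length rest' = r - 1" using length_eq jj by simp
  then have start_d: "block_start (rev jj) (r - 1) = N - z"
    and end_d: "block_start (rev jj) (Suc (r - 1)) = N"
    using jj sum_eq assms by (simp_all add: block_start_def)
  have slot_d: "col_slot (N - z) = r - 1" unfolding col_slot_def
    by (rule block_of_eqI) (use start_d end_d jj \<open>z > 0\<close> sum_eq in auto)
  show ?thesis
  proof
    show "x < N" using ii \<open>y > 0\<close> by simp
    show "N - z < N" using jj \<open>z > 0\<close> sum_eq by simp
    show "row_block x = 1" by (rule row_c)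
    show "col_block (N - z) = 0" using slot_d unfolding col_block_def by simp
    then show "is_one x (N - z)"
      using row_c slot_d start_c start_d unfolding is_one_def by simp
  qed
qed

section \<open>Expansion of the determinant\<close>

definition perms_nz :: "(nat \<Rightarrow> nat) set" where
  "perms_nz = {p. p permutes {0..<N} \<and> (\<forall>i<N. is_var i (p i) \<or> is_one i (p i))}"

definition var_rows :: "(nat \<Rightarrow> nat) \<Rightarrow> nat set" where
  "var_rows p = {i\<in>{0..<N}. is_var i (p i)}"

definition one_rows :: "(nat \<Rightarrow> nat) \<Rightarrow> nat set" where
  "one_rows p = {i\<in>{0..<N}. is_one i (p i)}"

definition perm_monom :: "(nat \<Rightarrow> nat) \<Rightarrow> (nat \<times> nat) \<Rightarrow>\<^sub>0 nat" where
  "perm_monom p = (\<Sum>i\<in>var_rows p. Poly_Mapping.single (i, p i) 1)"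

definition perm_deg :: "(nat \<Rightarrow> nat) \<Rightarrow> nat" where
  "perm_deg p = card (var_rows p)"

lemma finite_perms_nz: "finite perms_nz"
  unfolding perms_nz_def by (rule finite_subset[OF _ finite_permutations[of "{0..<N}"]]) auto

lemma perms_nz_permutes: "p \<in> perms_nz \<Longrightarrow> p permutes {0..<N}"
  unfolding perms_nz_def by auto

lemma perms_nz_var_or_one: "p \<in> perms_nz \<Longrightarrow> i < N \<Longrightarrow> is_var i (p i) \<or> is_one i (p i)"
  unfolding perms_nz_def by auto

lemma perms_nz_less: "p \<in> perms_nz \<Longrightarrow> i < N \<Longrightarrow> p i < N"
  using perms_nz_permutes permutes_in_image by fastforce

lemma perms_nz_inj: "p \<in> perms_nz \<Longrightarrow> inj p"
  using perms_nz_permutes permutes_inj by blast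

lemma finite_var_rows: "finite (var_rows p)"
  unfolding var_rows_def by simp

lemma mon_deg_perm_monom: "mon_deg (perm_monom p) = perm_deg p"
  unfolding perm_monom_def perm_deg_def mon_deg_sum by simp

lemma prod_entries_perms_nz:
  assumes "p \<in> perms_nz"
  shows "(\<Prod>i=0..<N. M_entry ii jj i (p i) :: 'a::comm_semiring_1 mpoly)
    = Poly_Mapping.single (perm_monom p) 1"
proof -
  have "(\<Prod>i=0..<N. M_entry ii jj i (p i) :: 'a mpoly)
      = (\<Prod>i=0..<N. Poly_Mapping.single (if is_var i (p i) then Poly_Mapping.single (i, p i) 1 else 0) 1)"
    using perms_nz_var_or_one[OF assms]
    by (intro prod.cong) (auto simp: M_entry_eq Xvar_def not_var_if_one)
  also have "\<dots> = Poly_Mapping.single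
      (\<Sum>i=0..<N. if is_var i (p i) then Poly_Mapping.single (i, p i) 1 else 0) 1"
    by (rule prod_single_one) simp
  also have "(\<Sum>i=0..<N. if is_var i (p i) then Poly_Mapping.single (i, p i) 1 else 0) = perm_monom p"
    unfolding perm_monom_def var_rows_def by (rule sum.inter_filter[symmetric]) simp
  finally show ?thesis .
qed

lemma det_Mmat_eq_sum_perms_nz:
  "det (Mmat ii jj :: 'a::comm_ring_1 mpoly mat)
    = (\<Sum>p\<in>perms_nz. signof p * (\<Prod>i=0..<N. M_entry ii jj i (p i)))"
proof -
  have "det (Mmat ii jj :: 'a mpoly mat)
      = (\<Sum>p\<in>{p. p permutes {0..<N}}. signof p * (\<Prod>i=0..<N. M_entry ii jj i (p i)))"
    unfolding det_def Mmat_def using sum_eq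
    by (auto intro!: sum.cong prod.cong simp: permutes_in_image)
  also have "\<dots> = (\<Sum>p\<in>perms_nz. signof p * (\<Prod>i=0..<N. M_entry ii jj i (p i)))"
  proof (rule sum.mono_neutral_right)
    show "\<forall>p\<in>{p. p permutes {0..<N}} - perms_nz.
        signof p * (\<Prod>i=0..<N. M_entry ii jj i (p i) :: 'a mpoly) = 0"
    proof
      fix p assume "p \<in> {p. p permutes {0..<N}} - perms_nz"
      then obtain i where "i < N" "\<not> is_var i (p i)" "\<not> is_one i (p i)"
        unfolding perms_nz_def by auto
      then have "(\<Prod>i=0..<N. M_entry ii jj i (p i) :: 'a mpoly) = 0"
        by (intro prod_zero bexI[of _ i]) (auto simp: M_entry_eq)
      then show "signof p * (\<Prod>i=0..<N. M_entry ii jj i (p i) :: 'a mpoly) = 0" by simp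
    qed
  qed (auto simp: perms_nz_def finite_permutations)
  finally show ?thesis .
qed

lemma det_Mmat_eq_sum_monom:
  "det (Mmat ii jj :: 'a::comm_ring_1 mpoly mat)
    = (\<Sum>p\<in>perms_nz. Poly_Mapping.single (perm_monom p) (of_int (sign p)))"
  unfolding det_Mmat_eq_sum_perms_nz
  by (intro sum.cong) (auto simp: prod_entries_perms_nz mult_single simp flip: single_of_int)

lemma lookup_perm_monom:
  "Poly_Mapping.lookup (perm_monom p) (i, j) = (if i < N \<and> is_var i (p i) \<and> j = p i then 1 else 0)"
proof -
  have "Poly_Mapping.lookup (perm_monom p) (i, j)
      = (\<Sum>k\<in>var_rows p. if k = i then (if p i = j then 1 else 0) else 0)"
    unfolding perm_monom_def lookup_sum by (intro sum.cong) (auto simp: lookup_single)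
  also have "\<dots> = (if i < N \<and> is_var i (p i) \<and> j = p i then 1 else 0)"
    by (subst sum.delta) (auto simp: var_rows_def)
  finally show ?thesis .
qed

lemma var_agree_if_perm_monom_eq:
  assumes "perm_monom p = perm_monom q" "i < N" "is_var i (p i)"
  shows "q i = p i \<and> is_var i (q i)"
proof -
  have "Poly_Mapping.lookup (perm_monom q) (i, p i) = 1"
    using lookup_perm_monom[of p i "p i"] assms by simp
  then show ?thesis by (simp add: lookup_perm_monom split: if_splits)
qed

text \<open>A row picks its 1 exactly when it picks no indeterminate, and a row contains at most
  one 1; so the monomial determines the permutation.\<close>

lemma perm_monom_inj_on_perms_nz:
  assumes p: "p \<in> perms_nz" and q: "q \<in> perms_nz" and eq: "perm_monom p = perm_monom q"
  shows "p = q"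
proof
  fix i
  show "p i = q i"
  proof (cases "i < N")
    case False
    then show ?thesis
      using permutes_not_in[OF perms_nz_permutes[OF p]] permutes_not_in[OF perms_nz_permutes[OF q]]
      by simp
  next
    case True
    show ?thesis
    proof (cases "is_var i (p i)")
      case True
      then show ?thesis using var_agree_if_perm_monom_eq[OF eq \<open>i < N\<close>] by simp
    next
      case False
      then have "\<not> is_var i (q i)" using var_agree_if_perm_monom_eq[OF eq[symmetric] \<open>i < N\<close>] by blast
      then have "is_one i (p i)" "is_one i (q i)"
        using False perms_nz_var_or_one[OF p \<open>i < N\<close>] perms_nz_var_or_one[OF q \<open>i < N\<close>] by auto
      then show ?thesis
        using one_unique_in_row perms_nz_less[OF p \<open>i < N\<close>] perms_nz_less[OF q \<open>i < N\<close>] by blast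
    qed
  qed
qed

lemma lookup_det_Mmat:
  "Poly_Mapping.lookup (det (Mmat ii jj :: 'a::comm_ring_1 mpoly mat)) m
    = (\<Sum>p\<in>perms_nz. if perm_monom p = m then of_int (sign p) else 0)"
  unfolding det_Mmat_eq_sum_monom lookup_sum by (intro sum.cong) (auto simp: lookup_single)

lemma lookup_det_Mmat_monom:
  assumes "p \<in> perms_nz"
  shows "Poly_Mapping.lookup (det (Mmat ii jj :: 'a::comm_ring_1 mpoly mat)) (perm_monom p)
    = of_int (sign p)"
proof -
  have "(\<Sum>q\<in>perms_nz. if perm_monom q = perm_monom p then (of_int (sign q) :: 'a) else 0)
      = (\<Sum>q\<in>perms_nz. if q = p then of_int (sign q) else 0)"
    by (intro sum.cong) (use perm_monom_inj_on_perms_nz assms in auto)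
  then show ?thesis using assms finite_perms_nz by (simp add: lookup_det_Mmat)
qed

lemma keys_det_Mmat:
  "Poly_Mapping.keys (det (Mmat ii jj :: 'a::comm_ring_1 mpoly mat)) = perm_monom ` perms_nz"
proof (intro equalityI subsetI)
  fix m assume m: "m \<in> Poly_Mapping.keys (det (Mmat ii jj :: 'a mpoly mat))"
  show "m \<in> perm_monom ` perms_nz"
  proof (rule ccontr)
    assume "m \<notin> perm_monom ` perms_nz"
    then have "Poly_Mapping.lookup (det (Mmat ii jj :: 'a mpoly mat)) m = 0"
      unfolding lookup_det_Mmat by (intro sum.neutral) auto
    then show False using m by (simp add: in_keys_iff)
  qed
next
  fix m assume "m \<in> perm_monom ` perms_nz"
  then obtain p where "p \<in> perms_nz" "m = perm_monom p" by auto
  then show "m \<in> Poly_Mapping.keys (det (Mmat ii jj :: 'a mpoly mat))"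
    using lookup_det_Mmat_monom[of p, where 'a='a] by (simp add: in_keys_iff sign_def)
qed

lemma hom_component_det_Mmat_nonzero:
  assumes "p \<in> perms_nz"
  shows "hom_component (perm_deg p) (det (Mmat ii jj) :: 'a::comm_ring_1 mpoly) \<noteq> 0"
proof -
  have "Poly_Mapping.lookup (hom_component (perm_deg p) (det (Mmat ii jj) :: 'a mpoly)) (perm_monom p)
      = of_int (sign p)"
    using lookup_det_Mmat_monom[OF assms] by (simp add: lookup_hom_component mon_deg_perm_monom)
  then show ?thesis by (auto simp: sign_def split: if_splits)
qed

lemma total_deg_det_Mmat:
  assumes "p0 \<in> perms_nz" "\<forall>p\<in>perms_nz. perm_deg p \<le> perm_deg p0"
  shows "total_deg (det (Mmat ii jj) :: 'a::comm_ring_1 mpoly) = perm_deg p0"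
proof -
  have "mon_deg ` Poly_Mapping.keys (det (Mmat ii jj) :: 'a mpoly) = perm_deg ` perms_nz"
    by (simp add: keys_det_Mmat image_image mon_deg_perm_monom)
  moreover have "Max (insert 0 (perm_deg ` perms_nz)) = perm_deg p0"
    using assms finite_perms_nz by (intro Max_eqI) auto
  ultimately show ?thesis unfolding total_deg_def by simp
qed

lemma homogeneous_det_Mmat_single_block:
  assumes "r = 1"
  shows "homogeneous (det (Mmat ii jj) :: 'a::comm_ring_1 mpoly)"
proof -
  have deg_N: "perm_deg p = N" if "p \<in> perms_nz" for p
  proof -
    have "var_rows p = {0..<N}" unfolding var_rows_def using all_var_if_single_block[OF assms] by auto
    then show ?thesis unfolding perm_deg_def by simp
  qed
  show ?thesis unfolding homogeneous_def keys_det_Mmat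
  proof
    fix m assume "m \<in> perm_monom ` perms_nz"
    then obtain p where p: "p \<in> perms_nz" "m = perm_monom p" by auto
    then have "total_deg (det (Mmat ii jj) :: 'a mpoly) = perm_deg p"
      using deg_N by (intro total_deg_det_Mmat) auto
    then show "mon_deg m = total_deg (det (Mmat ii jj) :: 'a mpoly)"
      using p by (simp add: mon_deg_perm_monom)
  qed
qed

section \<open>Terms of degree one less\<close>

lemma perms_nz_swap:
  assumes p: "p \<in> perms_nz" and "a < N" "c < N"
    and "is_var a (p c) \<or> is_one a (p c)" "is_var c (p a) \<or> is_one c (p a)"
  shows "p \<circ> Transposition.transpose a c \<in> perms_nz"
proof -
  have "p \<circ> Transposition.transpose a c permutes {0..<N}"
    by (rule permutes_compose[OF permutes_swap_id perms_nz_permutes[OF p]]) (use assms in auto)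
  then show ?thesis
    unfolding perms_nz_def using assms perms_nz_var_or_one[OF p] by (auto simp: transpose_def)
qed

text \<open>If p0 misses the 1 at (a, b), then p0 picks indeterminates at (a, p0 a) and at
  (a', b), where a' is the row it maps to column b, since row a and column b contain no
  other 1.  Exchanging the two columns trades the indeterminate in row a for the 1, and
  (a', p0 a) is again an indeterminate by var_exchange.\<close>

lemma exists_perm_deg_one_less:
  assumes p0: "p0 \<in> perms_nz" and ab: "a < N" "b < N" "is_one a b" "p0 a \<noteq> b"
  obtains q where "q \<in> perms_nz" "perm_deg q + 1 = perm_deg p0"
proof -
  define a' where "a' = Hilbert_Choice.inv p0 b"
  have perm: "p0 permutes {0..<N}" by (rule perms_nz_permutes[OF p0])
  have a'N: "a' < N" unfolding a'_def using perm ab(2) permutes_inv permutes_in_image by fastforce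
  have pa': "p0 a' = b" unfolding a'_def using perm by (meson permutes_inverses(1))
  have aa': "a \<noteq> a'" using pa' ab(4) by auto
  have var_a: "is_var a (p0 a)"
    using perms_nz_var_or_one[OF p0 ab(1)] one_unique_in_row[OF perms_nz_less[OF p0 ab(1)] ab(2) _ ab(3)] ab(4)
    by blast
  have var_a': "is_var a' b"
    using perms_nz_var_or_one[OF p0 a'N] one_unique_in_col[OF a'N ab(1) _ ab(3)] aa' pa'
    by auto
  have var_a'_a: "is_var a' (p0 a)" by (rule var_exchange[OF ab(3) var_a var_a'])
  define q where "q = p0 \<circ> Transposition.transpose a a'"
  have q: "q \<in> perms_nz" unfolding q_def
    by (rule perms_nz_swap[OF p0 ab(1) a'N]) (use pa' ab(3) var_a'_a in auto)
  have "var_rows q = var_rows p0 - {a}"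
    unfolding var_rows_def q_def using aa' pa' var_a'_a var_a var_a' not_var_if_one[OF ab(3)]
    by (auto simp: transpose_def)
  moreover have "a \<in> var_rows p0" unfolding var_rows_def using ab(1) var_a by auto
  ultimately have "perm_deg q + 1 = perm_deg p0"
    unfolding perm_deg_def using card_Suc_Diff1[OF finite_var_rows] by simp
  with q that show ?thesis by blast
qed

section \<open>Factorization of the determinant\<close>

definition splice :: "nat set \<Rightarrow> (nat \<Rightarrow> nat) \<Rightarrow> (nat \<Rightarrow> nat) \<Rightarrow> nat \<Rightarrow> nat" where
  "splice R a b i = (if i \<in> R then a i else b i)"

definition perms_agree_off :: "nat set \<Rightarrow> (nat \<Rightarrow> nat) \<Rightarrow> (nat \<Rightarrow> nat) set" where
  "perms_agree_off R p0 = {a\<in>perms_nz. \<forall>i. i \<notin> R \<longrightarrow> a i = p0 i}"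

definition perms_agree_on :: "nat set \<Rightarrow> (nat \<Rightarrow> nat) \<Rightarrow> (nat \<Rightarrow> nat) set" where
  "perms_agree_on R p0 = {b\<in>perms_nz. \<forall>i\<in>R. b i = p0 i}"

definition minor_on :: "nat set \<Rightarrow> (nat \<Rightarrow> nat) \<Rightarrow> 'a::comm_ring_1 mpoly" where
  "minor_on R p0 = (\<Sum>a\<in>perms_agree_off R p0. signof a * (\<Prod>i\<in>R. M_entry ii jj i (a i)))"

definition minor_off :: "nat set \<Rightarrow> (nat \<Rightarrow> nat) \<Rightarrow> 'a::comm_ring_1 mpoly" where
  "minor_off R p0 =
    (\<Sum>b\<in>perms_agree_on R p0. signof b * (\<Prod>i\<in>{0..<N} - R. M_entry ii jj i (b i)))"

lemma splice_in_perms_nz: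
  assumes R: "R \<subseteq> {0..<N}" and a: "a \<in> perms_nz" and b: "b \<in> perms_nz"
    and img: "a ` R = b ` R"
  shows "splice R a b \<in> perms_nz"
proof -
  have "splice R a b ` {0..<N} = a ` R \<union> b ` ({0..<N} - R)"
    using R unfolding splice_def by (auto simp: image_iff)
  also have "\<dots> = b ` {0..<N}" using img R by blast
  also have "\<dots> = {0..<N}" by (rule permutes_image[OF perms_nz_permutes[OF b]])
  finally have "bij_betw (splice R a b) {0..<N} {0..<N}"
    by (simp add: bij_betw_def eq_card_imp_inj_on)
  then have "splice R a b permutes {0..<N}"
    by (rule bij_imp_permutes)
      (use R permutes_not_in[OF perms_nz_permutes[OF b]] in \<open>auto simp: splice_def\<close>)
  moreover have "\<forall>i<N. is_var i (splice R a b i) \<or> is_one i (splice R a b i)"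
    using perms_nz_var_or_one[OF a] perms_nz_var_or_one[OF b] by (simp add: splice_def)
  ultimately show ?thesis by (simp add: perms_nz_def)
qed

context
  fixes R and p0
  assumes R_sub: "R \<subseteq> {0..<N}" and p0: "p0 \<in> perms_nz"
    and same_image: "\<forall>p\<in>perms_nz. p ` R = p0 ` R"
begin

lemma bij_betw_splice:
  "bij_betw (\<lambda>(a, b). splice R a b) (perms_agree_off R p0 \<times> perms_agree_on R p0) perms_nz"
proof (rule bij_betw_byWitness[where f' = "\<lambda>p. (splice R p p0, splice R p0 p)"])
  show "\<forall>x\<in>perms_agree_off R p0 \<times> perms_agree_on R p0.
      (\<lambda>p. (splice R p p0, splice R p0 p)) ((\<lambda>(a, b). splice R a b) x) = x"
    unfolding perms_agree_off_def perms_agree_on_def splice_def by auto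
  show "\<forall>p\<in>perms_nz. (\<lambda>(a, b). splice R a b) (splice R p p0, splice R p0 p) = p"
    unfolding splice_def by auto
  show "(\<lambda>(a, b). splice R a b) ` (perms_agree_off R p0 \<times> perms_agree_on R p0) \<subseteq> perms_nz"
    using splice_in_perms_nz[OF R_sub] same_image
    unfolding perms_agree_off_def perms_agree_on_def by auto
  show "(\<lambda>p. (splice R p p0, splice R p0 p)) ` perms_nz \<subseteq> perms_agree_off R p0 \<times> perms_agree_on R p0"
    using splice_in_perms_nz[OF R_sub _ p0] splice_in_perms_nz[OF R_sub p0] same_image
    unfolding perms_agree_off_def perms_agree_on_def by (auto simp: splice_def)
qed

lemma splice_eq_comp:
  assumes a: "a \<in> perms_agree_off R p0" and b: "b \<in> perms_agree_on R p0"
  shows "splice R a b = a \<circ> Hilbert_Choice.inv p0 \<circ> b"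
proof
  fix i
  have perm0: "p0 permutes {0..<N}" by (rule perms_nz_permutes[OF p0])
  have bP: "b \<in> perms_nz" using b unfolding perms_agree_on_def by auto
  show "splice R a b i = (a \<circ> Hilbert_Choice.inv p0 \<circ> b) i"
  proof (cases "i \<in> R")
    case True
    then have "b i = p0 i" using b unfolding perms_agree_on_def by auto
    then show ?thesis
      using True permutes_inverses(2)[OF perm0, of i] unfolding splice_def comp_def by simp
  next
    case False
    define k where "k = Hilbert_Choice.inv p0 (b i)"
    have pk: "p0 k = b i" unfolding k_def using permutes_inverses(1)[OF perm0] by simp
    have "k \<notin> R"
    proof
      assume "k \<in> R"
      then have "b i \<in> b ` R" using pk same_image bP by (metis image_eqI)
      then show False using False inj_image_mem_iff[OF perms_nz_inj[OF bP]] by blast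
    qed
    then have "a k = p0 k" using a unfolding perms_agree_off_def by auto
    then show ?thesis using False pk unfolding splice_def k_def by simp
  qed
qed

lemma signof_splice:
  assumes a: "a \<in> perms_agree_off R p0" and b: "b \<in> perms_agree_on R p0"
  shows "(signof (splice R a b) :: 'a::comm_ring_1) = signof a * signof p0 * signof b"
proof -
  have perm0: "p0 permutes {0..<N}" by (rule perms_nz_permutes[OF p0])
  have perm_a: "a permutes {0..<N}" and perm_b: "b permutes {0..<N}"
    using a b perms_nz_permutes unfolding perms_agree_off_def perms_agree_on_def by auto
  have "permutation a" "permutation b" "permutation (Hilbert_Choice.inv p0)"
    using perm_a perm_b permutes_inv[OF perm0] by (auto intro: permutes_imp_permutation)
  then have "sign (splice R a b) = sign a * sign (Hilbert_Choice.inv p0) * sign b"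
    unfolding splice_eq_comp[OF a b] by (simp add: sign_compose permutation_compose)
  also have "sign (Hilbert_Choice.inv p0) = sign p0"
    by (rule sign_inverse[OF permutes_imp_permutation[OF finite_atLeastLessThan perm0]])
  finally show ?thesis by simp
qed

lemma det_Mmat_eq_minor_product:
  "det (Mmat ii jj :: 'a::comm_ring_1 mpoly mat) = (signof p0 * minor_on R p0) * minor_off R p0"
proof -
  let ?T = "\<lambda>p. signof p * (\<Prod>i=0..<N. M_entry ii jj i (p i) :: 'a mpoly)"
  have "?T (splice R a b)
      = (signof p0 * (signof a * (\<Prod>i\<in>R. M_entry ii jj i (a i))))
        * (signof b * (\<Prod>i\<in>{0..<N} - R. M_entry ii jj i (b i)))"
    if "a \<in> perms_agree_off R p0" "b \<in> perms_agree_on R p0" for a b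
  proof -
    have "(\<Prod>i=0..<N. M_entry ii jj i (splice R a b i) :: 'a mpoly)
        = (\<Prod>i\<in>{0..<N} - R. M_entry ii jj i (b i)) * (\<Prod>i\<in>R. M_entry ii jj i (a i))"
      unfolding prod.subset_diff[OF R_sub finite_atLeastLessThan]
      by (intro arg_cong2[where f = "(*)"] prod.cong) (auto simp: splice_def)
    then show ?thesis unfolding signof_splice[OF that] by (simp only: mult_ac)
  qed
  then have "det (Mmat ii jj :: 'a mpoly mat)
      = (\<Sum>(a, b)\<in>perms_agree_off R p0 \<times> perms_agree_on R p0.
          (signof p0 * (signof a * (\<Prod>i\<in>R. M_entry ii jj i (a i))))
          * (signof b * (\<Prod>i\<in>{0..<N} - R. M_entry ii jj i (b i))))"
    unfolding det_Mmat_eq_sum_perms_nz sum.reindex_bij_betw[OF bij_betw_splice, symmetric]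
    by (intro sum.cong) auto
  also have "\<dots> = (\<Sum>a\<in>perms_agree_off R p0. signof p0 * (signof a * (\<Prod>i\<in>R. M_entry ii jj i (a i))))
      * (\<Sum>b\<in>perms_agree_on R p0. signof b * (\<Prod>i\<in>{0..<N} - R. M_entry ii jj i (b i)))"
    by (simp only: sum_product sum.cartesian_product)
  also have "\<dots> = (signof p0 * minor_on R p0) * minor_off R p0"
    unfolding minor_on_def minor_off_def by (simp only: sum_distrib_left)
  finally show ?thesis .
qed

end

section \<open>Terms using all the 1s of the identity blocks\<close>

definition rows_with_one :: "nat set" where
  "rows_with_one = {i. i < N \<and> (\<exists>j<N. is_one i j)}"

definition cols_with_one :: "nat set" where
  "cols_with_one = {j. \<exists>i<N. is_one i j}"

definition first_block_rows :: "nat set" where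
  "first_block_rows = {i. i < N \<and> row_block i = 0}"

definition first_block_cols :: "nat set" where
  "first_block_cols = {j. j < N \<and> col_block j = 0}"

lemma card_var_rows_add_card_one_rows:
  assumes p: "p \<in> perms_nz" shows "card (var_rows p) + card (one_rows p) = N"
proof -
  have "var_rows p \<union> one_rows p = {0..<N}"
    using perms_nz_var_or_one[OF p] unfolding var_rows_def one_rows_def by fastforce
  moreover have "var_rows p \<inter> one_rows p = {}"
    using not_var_if_one unfolding var_rows_def one_rows_def by auto
  ultimately show ?thesis
    by (metis card_Un_disjoint card_atLeastLessThan diff_zero finite_Un finite_atLeastLessThan)
qed

text \<open>Every term uses N - perm_deg p of the 1s; a term of maximal degree uses the fewest,
  so if it uses all of them, so does every term.\<close>

lemma perms_nz_use_all_ones: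
  assumes p0: "p0 \<in> perms_nz" and max: "\<forall>p\<in>perms_nz. perm_deg p \<le> perm_deg p0"
    and all_ones: "\<forall>a<N. \<forall>b<N. is_one a b \<longrightarrow> p0 a = b"
    and p: "p \<in> perms_nz" and ab: "a < N" "b < N" "is_one a b"
  shows "p a = b"
proof -
  have "one_rows p \<subseteq> rows_with_one"
    using perms_nz_less[OF p] unfolding one_rows_def rows_with_one_def by auto
  moreover have "one_rows p0 = rows_with_one"
    using all_ones perms_nz_less[OF p0] unfolding one_rows_def rows_with_one_def by auto
  moreover have "card (one_rows p0) \<le> card (one_rows p)"
    using card_var_rows_add_card_one_rows[OF p] card_var_rows_add_card_one_rows[OF p0] max p
    unfolding perm_deg_def by fastforce
  moreover have "finite rows_with_one" unfolding rows_with_one_def by simp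
  ultimately have "one_rows p = rows_with_one" by (metis card_seteq)
  then have "is_one a (p a)" using ab unfolding one_rows_def rows_with_one_def by auto
  then show ?thesis using one_unique_in_row[OF perms_nz_less[OF p ab(1)] ab(2) _ ab(3)] by auto
qed

lemma lookup_minor_on_first_block_rows_at_0:
  assumes "0 < r"
  shows "Poly_Mapping.lookup (minor_on first_block_rows p0 :: 'a::comm_ring_1 mpoly) 0 = 0"
  unfolding minor_on_def lookup_sum
proof (intro sum.neutral ballI)
  fix a :: "nat \<Rightarrow> nat"
  have "0 \<in> first_block_rows"
    using N_pos[OF assms] row_block_0[OF assms] unfolding first_block_rows_def by simp
  moreover have "Poly_Mapping.lookup (M_entry ii jj 0 (a 0) :: 'a mpoly) 0 = 0"
    using row_block_0[OF assms] by (simp add: M_entry_eq is_var_def)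
  ultimately have "(\<Prod>i\<in>first_block_rows. Poly_Mapping.lookup (M_entry ii jj i (a i) :: 'a mpoly) 0) = 0"
    unfolding first_block_rows_def by (intro prod_zero) auto
  then show "Poly_Mapping.lookup (signof a * (\<Prod>i\<in>first_block_rows. M_entry ii jj i (a i)) :: 'a mpoly) 0 = 0"
    by (simp add: lookup_of_int_mult_at_0 lookup_prod_at_0)
qed

context
  fixes p0
  assumes several_blocks: "1 < r"
    and p0: "p0 \<in> perms_nz"
    and max: "\<forall>p\<in>perms_nz. perm_deg p \<le> perm_deg p0"
    and all_ones: "\<forall>a<N. \<forall>b<N. is_one a b \<longrightarrow> p0 a = b"
begin

text \<open>Otherwise swapping a with the row c of the 1 at (c, d) in
  one_in_first_identity_block would give a term not using that 1.\<close>

lemma perms_nz_first_block_rows_to_cols: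
  assumes p: "p \<in> perms_nz" and a: "a \<in> first_block_rows"
  shows "p a \<in> first_block_cols"
proof (rule ccontr)
  assume not_col: "p a \<notin> first_block_cols"
  obtain c d where cd: "c < N" "d < N" "row_block c = 1" "col_block d = 0" "is_one c d"
    using one_in_first_identity_block[OF several_blocks] .
  have aN: "a < N" and row_a: "row_block a = 0" using a unfolding first_block_rows_def by auto
  have col_pa: "col_block (p a) \<noteq> 0"
    using not_col perms_nz_less[OF p aN] unfolding first_block_cols_def by auto
  have "p c = d" by (rule perms_nz_use_all_ones[OF p0 max all_ones p cd(1,2,5)])
  then have "p \<circ> Transposition.transpose a c \<in> perms_nz"
    by (intro perms_nz_swap[OF p aN cd(1)]) (use row_a cd(3,4) col_pa in \<open>auto simp: is_var_def\<close>)
  then have "(p \<circ> Transposition.transpose a c) c = d"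
    by (rule perms_nz_use_all_ones[OF p0 max all_ones _ cd(1,2,5)])
  then have "p a = d" by (simp add: transpose_def)
  then show False using col_pa cd(4) by simp
qed

lemma image_first_block_rows:
  assumes p: "p \<in> perms_nz"
  shows "p ` first_block_rows = first_block_cols - cols_with_one"
proof (intro equalityI subsetI)
  fix j assume "j \<in> p ` first_block_rows"
  then obtain a where a: "a \<in> first_block_rows" "j = p a" by auto
  have aN: "a < N" and row_a: "row_block a = 0" using a unfolding first_block_rows_def by auto
  have "j \<notin> cols_with_one"
  proof
    assume "j \<in> cols_with_one"
    then obtain i where i: "i < N" "is_one i j" unfolding cols_with_one_def by auto
    have "j < N" using perms_nz_less[OF p aN] a(2) by simp
    then have "p i = j" by (rule perms_nz_use_all_ones[OF p0 max all_ones p i(1) _ i(2)])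
    then have "i = a" using a(2) perms_nz_inj[OF p] by (auto dest: injD)
    then show False using i(2) row_a unfolding is_one_def by simp
  qed
  then show "j \<in> first_block_cols - cols_with_one"
    using perms_nz_first_block_rows_to_cols[OF p a(1)] a(2) by simp
next
  fix j assume j: "j \<in> first_block_cols - cols_with_one"
  then have jN: "j < N" and col_j: "col_block j = 0" unfolding first_block_cols_def by auto
  define i where "i = Hilbert_Choice.inv p j"
  have perm: "p permutes {0..<N}" by (rule perms_nz_permutes[OF p])
  have iN: "i < N" unfolding i_def using perm jN permutes_inv permutes_in_image by fastforce
  have pi: "p i = j" unfolding i_def using perm by (meson permutes_inverses(1))
  have "row_block i = 0"
  proof (rule ccontr)
    assume "row_block i \<noteq> 0"
    then have "is_one i j" using perms_nz_var_or_one[OF p iN] pi col_j unfolding is_var_def by auto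
    then show False using j iN unfolding cols_with_one_def by auto
  qed
  then show "j \<in> p ` first_block_rows" using iN pi unfolding first_block_rows_def by force
qed

text \<open>Column 0 lies in the leftmost column block, so it contains only indeterminates, and
  no row of the first row block is mapped to it.\<close>

lemma lookup_minor_off_first_block_rows_at_0:
  "Poly_Mapping.lookup (minor_off first_block_rows p0 :: 'a::comm_ring_1 mpoly) 0 = 0"
  unfolding minor_off_def lookup_sum
proof (intro sum.neutral ballI)
  fix b assume "b \<in> perms_agree_on first_block_rows p0"
  then have b: "b \<in> perms_nz" unfolding perms_agree_on_def by auto
  have r0: "0 < r" using several_blocks by linarith
  define k where "k = Hilbert_Choice.inv b 0"
  have perm: "b permutes {0..<N}" by (rule perms_nz_permutes[OF b])
  have kN: "k < N" unfolding k_def using perm N_pos[OF r0] permutes_inv permutes_in_image by fastforce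
  have bk: "b k = 0" unfolding k_def using perm by (meson permutes_inverses(1))
  have "k \<notin> first_block_rows"
  proof
    assume "k \<in> first_block_rows"
    then have "b k \<in> first_block_cols" using image_first_block_rows[OF b] by auto
    then show False using bk col_block_0[OF r0] several_blocks unfolding first_block_cols_def by simp
  qed
  moreover have "Poly_Mapping.lookup (M_entry ii jj k (b k) :: 'a mpoly) 0 = 0"
    using row_block_less[OF kN] col_block_0[OF r0] bk by (simp add: M_entry_eq is_var_def)
  ultimately have "(\<Prod>i\<in>{0..<N} - first_block_rows.
      Poly_Mapping.lookup (M_entry ii jj i (b i) :: 'a mpoly) 0) = 0"
    using kN by (intro prod_zero) auto
  then show "Poly_Mapping.lookup
      (signof b * (\<Prod>i\<in>{0..<N} - first_block_rows. M_entry ii jj i (b i)) :: 'a mpoly) 0 = 0"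
    by (simp add: lookup_of_int_mult_at_0 lookup_prod_at_0)
qed

lemma det_Mmat_not_irreducible: "\<not> irreducible (det (Mmat ii jj) :: 'a::comm_ring_1 mpoly)"
proof -
  have r0: "0 < r" using several_blocks by linarith
  have "first_block_rows \<subseteq> {0..<N}" unfolding first_block_rows_def by auto
  moreover have "\<forall>p\<in>perms_nz. p ` first_block_rows = p0 ` first_block_rows"
    using image_first_block_rows p0 by auto
  ultimately have "det (Mmat ii jj) = (signof p0 * minor_on first_block_rows p0 :: 'a mpoly)
      * minor_off first_block_rows p0"
    by (rule det_Mmat_eq_minor_product[OF _ p0])
  moreover have "Poly_Mapping.lookup (signof p0 * minor_on first_block_rows p0 :: 'a mpoly) 0 = 0"
    using lookup_minor_on_first_block_rows_at_0[where 'a = 'a, OF r0] by (simp add: lookup_of_int_mult_at_0)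
  ultimately show ?thesis
    using not_irreducible_if_factors_vanish_at_0 lookup_minor_off_first_block_rows_at_0 by metis
qed

end

lemma hom_component_det_Mmat_below_total_deg:
  assumes several_blocks: "1 < r" and irr: "irreducible (det (Mmat ii jj) :: 'a::comm_ring_1 mpoly)"
  shows "hom_component (total_deg (det (Mmat ii jj) :: 'a mpoly) - 1) (det (Mmat ii jj)) \<noteq> 0"
proof -
  have "perms_nz \<noteq> {}"
    using irr keys_det_Mmat[where 'a = 'a] by (metis image_empty keys_eq_empty not_irreducible_zero)
  then obtain p0 where p0: "p0 \<in> perms_nz" "perm_deg p0 = Max (perm_deg ` perms_nz)"
    using Max_in[of "perm_deg ` perms_nz"] finite_perms_nz by (metis finite_imageI image_iff image_is_empty)
  then have max: "\<forall>p\<in>perms_nz. perm_deg p \<le> perm_deg p0" using finite_perms_nz by simp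
  show ?thesis
  proof (cases "\<forall>a<N. \<forall>b<N. is_one a b \<longrightarrow> p0 a = b")
    case True
    then show ?thesis using det_Mmat_not_irreducible[OF several_blocks p0(1) max] irr by blast
  next
    case False
    then obtain q where q: "q \<in> perms_nz" "perm_deg q + 1 = perm_deg p0"
      using exists_perm_deg_one_less[OF p0(1)] by blast
    have "total_deg (det (Mmat ii jj) :: 'a mpoly) - 1 = perm_deg q"
      using total_deg_det_Mmat[OF p0(1) max, where 'a = 'a] q(2) by linarith
    then show ?thesis using hom_component_det_Mmat_nonzero[OF q(1)] by simp
  qed
qed

end

theorem corollary6p6:
  fixes ii jj :: "nat list"
  assumes "length ii = length jj"
    and "\<forall>k\<in>set ii. 0 < k" and "\<forall>k\<in>set jj. 0 < k"
    and "sum_list ii = sum_list jj"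
    and "(det (Mmat ii jj) :: 'a::field mpoly) \<noteq> 0"
    and "irreducible (det (Mmat ii jj) :: 'a::field mpoly)"
  shows "(length ii = 1 \<longrightarrow> homogeneous (det (Mmat ii jj) :: 'a mpoly))
       \<and> (length ii > 1 \<longrightarrow>
            hom_component (total_deg (det (Mmat ii jj) :: 'a mpoly) - 1)
              (det (Mmat ii jj) :: 'a mpoly) \<noteq> 0)"
proof -
  interpret M_matrix ii jj using assms(1-4) by unfold_locales
  show ?thesis
    using homogeneous_det_Mmat_single_block hom_component_det_Mmat_below_total_deg assms(6) by blast
qed

end
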